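(* Let $\mathcal{F}$ be a class of simple graphs closed under subdivisions. Then $\mathcal{F}\subseteq\mathrm{cl}(\mathcal{F}_K)$ for every non-bipartite graph $K$. In particular, $\equiv_{\mathcal{F}}$ admits $K$-cancellation for every non-bipartite graph $K$.
   Context: All graphs are finite, undirected, without multiple edges; simple means without loops. $\hom(F,G)$ counts homomorphisms; $G\equiv_{\mathcal{F}}H$ means $\hom(F,G)=\hom(F,H)$ for all $F\in\mathcal{F}$; $\mathrm{cl}(\mathcal{F})$ is the class of simple graphs $L$ such that for all simple $G,H$, $G\equiv_{\mathcal{F}}H$ implies $\hom(L,G)=\hom(L,H)$. $\mathcal{F}_K=\{F\in\mathcal{F}\mid\hom(F,K)>0\}$. A class is closed under subdivisions if replacing any edge of a member by a path yields a member. $G\times K$ is the categorical product (vertex set $V(G)\times V(K)$, $(g,k)\sim(g',k')$ iff $gg'\in E(G)$ and $kk'\in E(K)$). An equivalence relation $\approx$ on graphs admits $K$-cancellation if $G\times K\approx H\times K$ implies $G\approx H$ for all graphs $G,H$. *)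

theory Defs
  imports Main "HOL-Library.FuncSet"
begin

text \<open>Finite undirected graphs without multiple edges. An edge is a set of one
 (a loop) or two (an ordinary edge) vertices.\<close>

record 'a graph =
  verts :: "'a set"
  edges :: "'a set set"

definition wf_graph :: "'a graph \<Rightarrow> bool" where
  "wf_graph G \<longleftrightarrow> finite (verts G) \<and>
     (\<forall>e\<in>edges G. e \<subseteq> verts G \<and> (card e = 1 \<or> card e = 2))"

definition simple_graph :: "'a graph \<Rightarrow> bool" where
  "simple_graph G \<longleftrightarrow> wf_graph G \<and> (\<forall>e\<in>edges G. card e = 2)"

definition homs :: "'a graph \<Rightarrow> 'b graph \<Rightarrow> ('a \<Rightarrow> 'b) set" where
  "homs F G = {f \<in> verts F \<rightarrow>\<^sub>E verts G. \<forall>e\<in>edges F. f ` e \<in> edges G}"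

definition hom :: "'a graph \<Rightarrow> 'b graph \<Rightarrow> nat" where
  "hom F G = card (homs F G)"

definition hom_equiv :: "'v graph set \<Rightarrow> 'a graph \<Rightarrow> 'a graph \<Rightarrow> bool" where
  "hom_equiv \<F> G H \<longleftrightarrow> (\<forall>F\<in>\<F>. hom F G = hom F H)"

text \<open>cl(\<F>): the quantification over simple graphs G, H ranges over simple graphs
 with vertices in nat (every finite graph is isomorphic to one of these).\<close>
definition cl :: "nat graph set \<Rightarrow> nat graph set" where
  "cl \<F> = {L. simple_graph L \<and>
     (\<forall>G H :: nat graph. simple_graph G \<longrightarrow> simple_graph H \<longrightarrow>
        hom_equiv \<F> G H \<longrightarrow> hom L G = hom L H)}"

definition restrict_class :: "'v graph set \<Rightarrow> 'k graph \<Rightarrow> 'v graph set" where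
  "restrict_class \<F> K = {F \<in> \<F>. hom F K > 0}"

definition path_edges :: "'a list \<Rightarrow> 'a set set" where
  "path_edges p = {{p ! i, p ! Suc i} | i. Suc i < length p}"

definition subdivide_edge :: "'a graph \<Rightarrow> 'a \<Rightarrow> 'a \<Rightarrow> 'a list \<Rightarrow> 'a graph" where
  "subdivide_edge F u v ws =
     \<lparr>verts = verts F \<union> set ws,
      edges = (edges F - {{u, v}}) \<union> path_edges (u # ws @ [v])\<rparr>"

definition closed_under_subdivisions :: "'a graph set \<Rightarrow> bool" where
  "closed_under_subdivisions \<F> \<longleftrightarrow>
     (\<forall>F\<in>\<F>. \<forall>u v ws. {u, v} \<in> edges F \<and> u \<noteq> v \<and> ws \<noteq> [] \<and> distinct ws \<and>
        set ws \<inter> verts F = {} \<longrightarrow> subdivide_edge F u v ws \<in> \<F>)"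

definition bipartite :: "'a graph \<Rightarrow> bool" where
  "bipartite G \<longleftrightarrow> (\<exists>c :: 'a \<Rightarrow> bool. \<forall>e\<in>edges G. \<exists>x y. e = {x, y} \<and> c x \<noteq> c y)"

definition graph_prod :: "'a graph \<Rightarrow> 'b graph \<Rightarrow> ('a \<times> 'b) graph" where
  "graph_prod G K =
     \<lparr>verts = verts G \<times> verts K,
      edges = {{(g, k), (g', k')} | g g' k k'. {g, g'} \<in> edges G \<and> {k, k'} \<in> edges K}\<rparr>"

definition admits_cancellation ::
  "('a graph \<Rightarrow> 'a graph \<Rightarrow> bool) \<Rightarrow> (('a \<times> 'k) graph \<Rightarrow> ('a \<times> 'k) graph \<Rightarrow> bool)
     \<Rightarrow> 'k graph \<Rightarrow> bool" where
  "admits_cancellation R Rprod K \<longleftrightarrow>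
     (\<forall>G H. wf_graph G \<longrightarrow> wf_graph H \<longrightarrow> Rprod (graph_prod G K) (graph_prod H K) \<longrightarrow> R G H)"

end

theory Submission
  imports Defs Complex_Main "HOL-Library.Function_Algebras"
begin

(* Let F\<^sup>l be the graph obtained from F by subdividing each edge e into a path of length l e;
   it lies in the class whenever F does, and its homomorphisms into G correspond to maps on the
   vertices of F together with walks of length l e between the images of the ends of each edge e.
   A non-bipartite K has closed walks of every odd length \<ge> k at some vertex, so hom F\<^sup>l K > 0
   whenever all l e are odd and \<ge> k, and then hom F\<^sup>l G = hom F\<^sup>l H by hypothesis.
   With all labels but one fixed, hom F\<^sup>l G is a linear functional of the l e-th power of the
   adjacency matrix of G. For a real symmetric matrix, a linear functional vanishing on all large
   odd powers vanishes on the matrix itself; applied to the adjacency matrix of the disjoint union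
   of G and H, this lowers the labels to 1 one edge at a time and yields hom F G = hom F H.
   Cancellation follows from hom F (G \<times> K) = hom F G * hom F K. *)

section \<open>Matrices indexed by a finite set\<close>

type_synonym ('v, 'r) mat = "'v \<Rightarrow> 'v \<Rightarrow> 'r"

definition mat_mul :: "'v set \<Rightarrow> ('v, 'r::comm_semiring_1) mat \<Rightarrow> ('v, 'r) mat \<Rightarrow> ('v, 'r) mat"
  where "mat_mul V X Y = (\<lambda>x y. \<Sum>z\<in>V. X x z * Y z y)"

definition mat_one :: "'v set \<Rightarrow> ('v, 'r::comm_semiring_1) mat"
  where "mat_one V = (\<lambda>x y. if x = y \<and> x \<in> V then 1 else 0)"

fun mat_pow :: "'v set \<Rightarrow> ('v, 'r::comm_semiring_1) mat \<Rightarrow> nat \<Rightarrow> ('v, 'r) mat" where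
  "mat_pow V A 0 = mat_one V"
| "mat_pow V A (Suc n) = mat_mul V (mat_pow V A n) A"

definition supported_on :: "'v set \<Rightarrow> ('v, 'r::zero) mat \<Rightarrow> bool"
  where "supported_on V X \<longleftrightarrow> (\<forall>x y. x \<notin> V \<or> y \<notin> V \<longrightarrow> X x y = 0)"

definition mat_inner :: "'v set \<Rightarrow> ('v, 'r::comm_semiring_1) mat \<Rightarrow> ('v, 'r) mat \<Rightarrow> 'r"
  where "mat_inner V X Y = (\<Sum>x\<in>V. \<Sum>y\<in>V. X x y * Y x y)"

definition mat_diag_sum :: "('a, 'r::zero) mat \<Rightarrow> ('b, 'r) mat \<Rightarrow> ('a + 'b, 'r) mat"
  where "mat_diag_sum A B p q =
    (case (p, q) of (Inl x, Inl y) \<Rightarrow> A x y | (Inr x, Inr y) \<Rightarrow> B x y | _ \<Rightarrow> 0)"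

lemma mat_mul_assoc: "finite V \<Longrightarrow> mat_mul V (mat_mul V X Y) Z = mat_mul V X (mat_mul V Y Z)"
  unfolding mat_mul_def
  by (auto simp: fun_eq_iff sum_distrib_left sum_distrib_right mult.assoc intro: sum.swap)

lemma supported_on_mat_mul: "supported_on V X \<Longrightarrow> supported_on V Y \<Longrightarrow> supported_on V (mat_mul V X Y)"
  unfolding supported_on_def mat_mul_def by auto

lemma supported_on_mat_pow: "supported_on V A \<Longrightarrow> supported_on V (mat_pow V A n)"
  by (induction n) (simp_all add: supported_on_mat_mul, simp add: supported_on_def mat_one_def)

lemma mat_mul_one_right:
  assumes "finite V" "supported_on V X" shows "mat_mul V X (mat_one V) = X"
proof (intro ext)
  fix x y
  show "mat_mul V X (mat_one V) x y = X x y"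
    using assms by (cases "y \<in> V")
      (auto simp: mat_mul_def mat_one_def supported_on_def if_distrib cong: if_cong)
qed

lemma mat_mul_one_left:
  assumes "finite V" "supported_on V X" shows "mat_mul V (mat_one V) X = X"
proof (intro ext)
  fix x y
  show "mat_mul V (mat_one V) X x y = X x y"
    using assms by (cases "x \<in> V")
      (auto simp: mat_mul_def mat_one_def supported_on_def if_distrib[where f = "\<lambda>a. a * b" for b]
        cong: if_cong)
qed

lemma mat_pow_add:
  assumes "finite V" "supported_on V A"
  shows "mat_pow V A (m + n) = mat_mul V (mat_pow V A m) (mat_pow V A n)"
  by (induction n)
    (simp_all add: assms mat_mul_one_right supported_on_mat_pow mat_mul_assoc)

lemma mat_pow_1:
  assumes "finite V" "supported_on V A" shows "mat_pow V A 1 = A"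
  using mat_mul_one_left[OF assms] by simp

lemma mat_pow_Suc_left:
  assumes "finite V" "supported_on V A"
  shows "mat_pow V A (Suc n) = mat_mul V A (mat_pow V A n)"
  using mat_pow_add[OF assms, of 1 n] unfolding mat_pow_1[OF assms] by simp

lemma of_nat_mat_pow:
  "of_nat (mat_pow V A n x y) = mat_pow V (\<lambda>x y. of_nat (A x y)) n x y"
  by (induction n arbitrary: x y) (auto simp: mat_mul_def mat_one_def)

lemma mat_pow_diag_sum:
  assumes "finite V" "finite W"
  shows "mat_pow (V <+> W) (mat_diag_sum A B) n = mat_diag_sum (mat_pow V A n) (mat_pow W B n)"
proof (induction n)
  case 0
  show ?case by (auto simp: fun_eq_iff mat_one_def mat_diag_sum_def split: sum.split)
next
  case (Suc n)
  then show ?case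
    using assms by (auto simp: fun_eq_iff mat_mul_def mat_diag_sum_def sum.Plus split: sum.split)
qed

lemma mat_inner_diag_sum:
  assumes "finite V" "finite W"
  shows "mat_inner (V <+> W) (mat_diag_sum A B) (mat_diag_sum N M)
    = mat_inner V A N + mat_inner W B M"
  using assms by (simp add: mat_inner_def sum.Plus mat_diag_sum_def)

lemma mat_inner_sum_left:
  "mat_inner V (\<lambda>x y. \<Sum>i\<in>I. c i * X i x y) N = (\<Sum>i\<in>I. c i * mat_inner V (X i) N)"
  unfolding mat_inner_def
  by (simp add: sum_distrib_left sum_distrib_right mult.assoc sum.swap[of _ I])

lemma mat_mul_sum_left:
  "mat_mul V (\<lambda>x y. \<Sum>i\<in>I. c i * X i x y) Y = (\<lambda>x y. \<Sum>i\<in>I. c i * mat_mul V (X i) Y x y)"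
  unfolding mat_mul_def
  by (simp add: sum_distrib_left sum_distrib_right mult.assoc sum.swap[of _ I])

lemma sum_fun_apply: "(\<Sum>i\<in>I. f i) x = (\<Sum>i\<in>I. f i x)"
  by (induction I rule: infinite_finite_induct) simp_all

lemma supported_matrices_dependent:
  fixes S :: "nat \<Rightarrow> ('v, 'r::field) mat"
  assumes fin: "finite V" and supp: "\<And>i. supported_on V (S i)"
  shows "\<exists>c. (\<exists>i\<le>card (V \<times> V). c i \<noteq> 0) \<and> (\<forall>x y. (\<Sum>i\<le>card (V \<times> V). c i * S i x y) = 0)"
proof (cases "inj_on S {..card (V \<times> V)}")
  case False
  then obtain i j where ij: "i \<le> card (V \<times> V)" "j \<le> card (V \<times> V)" "i \<noteq> j" "S i = S j"
    unfolding inj_on_def by auto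
  define c where "c k = (if k = i then 1 else if k = j then -1 else 0 :: 'r)" for k
  have "(\<Sum>k\<le>card (V \<times> V). c k * S k x y) = (\<Sum>k\<in>{i, j}. c k * S k x y)" for x y
    by (rule sum.mono_neutral_right) (use ij in \<open>auto simp: c_def\<close>)
  then show ?thesis
    using ij by (intro exI[of _ c]) (auto simp: c_def)
next
  case inj: True
  interpret vs: vector_space "\<lambda>(c::'r) (X::('v, 'r) mat) x y. c * X x y"
    by unfold_locales (auto simp: fun_eq_iff algebra_simps)
  define unit where "unit p = (\<lambda>x y. if (x, y) = p then 1 else 0 :: 'r)" for p :: "'v \<times> 'v"
  have "X \<in> vs.span (unit ` (V \<times> V))" if "supported_on V X" for X
  proof -
    have "X = (\<Sum>p\<in>V \<times> V. (\<lambda>x y. X (fst p) (snd p) * unit p x y))"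
      using that fin by (auto simp: fun_eq_iff sum_fun_apply unit_def supported_on_def
          if_distrib[where f = "\<lambda>a. b * a" for b] sum.delta' cong: if_cong)
    also have "\<dots> \<in> vs.span (unit ` (V \<times> V))"
      by (intro vs.span_sum vs.span_scale vs.span_base imageI)
    finally show ?thesis .
  qed
  then have "S ` {..card (V \<times> V)} \<subseteq> vs.span (unit ` (V \<times> V))"
    using supp by blast
  moreover have "card (unit ` (V \<times> V)) < card (S ` {..card (V \<times> V)})"
    using card_image_le[of "V \<times> V" unit] card_image[OF inj] fin by (simp del: card_cartesian_product)
  ultimately have "vs.dependent (S ` {..card (V \<times> V)})"
    using vs.independent_span_bound[of "unit ` (V \<times> V)"] fin by force
  then obtain u where u: "(\<Sum>X\<in>S ` {..card (V \<times> V)}. (\<lambda>x y. u X * X x y)) = 0"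
    "\<exists>X\<in>S ` {..card (V \<times> V)}. u X \<noteq> 0"
    by (auto simp: vs.dependent_finite)
  have "(\<Sum>i\<le>card (V \<times> V). u (S i) * S i x y) = 0" for x y
    using fun_cong[OF fun_cong[OF u(1)], of x y]
    by (simp add: sum_fun_apply sum.reindex[OF inj])
  then show ?thesis
    using u(2) by (intro exI[of _ "u \<circ> S"]) auto
qed

text \<open>Each row \<open>P\<close> of \<open>Z A\<close> satisfies \<open>P P\<^sup>T = (Z A A Z\<^sup>T)\<^sub>x\<^sub>x = 0\<close>.\<close>

lemma mat_mul_sym_square_eq_0D:
  fixes A Z :: "('v, 'r::linordered_idom) mat"
  assumes fin: "finite V" and supp: "supported_on V A" and sym: "\<And>x y. A x y = A y x"
    and Z: "mat_mul V Z (mat_mul V A A) = (\<lambda>x y. 0)"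
  shows "mat_mul V Z A = (\<lambda>x y. 0)"
proof (intro ext)
  fix x y
  define P where "P = mat_mul V Z A x"
  have P_row: "(\<Sum>y\<in>V. A a y * P y) = 0" for a
  proof -
    have "(\<Sum>y\<in>V. A a y * P y) = mat_mul V (mat_mul V Z A) A x a"
      unfolding mat_mul_def P_def by (intro sum.cong refl) (simp add: sym[of a] mult.commute)
    also have "\<dots> = 0"
      using Z by (simp add: mat_mul_assoc[OF fin])
    finally show ?thesis .
  qed
  have "(\<Sum>y\<in>V. P y * P y) = (\<Sum>y\<in>V. \<Sum>a\<in>V. Z x a * (A a y * P y))"
    by (simp add: P_def mat_mul_def sum_distrib_right mult.assoc)
  also have "\<dots> = (\<Sum>a\<in>V. Z x a * (\<Sum>y\<in>V. A a y * P y))"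
    by (subst sum.swap) (simp add: sum_distrib_left)
  also have "\<dots> = 0"
    by (simp add: P_row)
  finally have "\<forall>y\<in>V. P y * P y = 0"
    using fin by (simp add: sum_nonneg_eq_0_iff)
  then show "mat_mul V Z A x y = 0"
    using supp by (cases "y \<in> V") (auto simp: P_def mat_mul_def supported_on_def)
qed

lemma mat_mul_sym_pow_eq_0D:
  fixes A Z :: "('v, 'r::linordered_idom) mat"
  assumes fin: "finite V" and supp: "supported_on V A" "supported_on V Z"
    and sym: "\<And>x y. A x y = A y x"
    and Z: "mat_mul V Z (mat_pow V A n) = (\<lambda>x y. 0)"
  shows "mat_mul V Z A = (\<lambda>x y. 0)"
proof (cases n)
  case 0
  then have "Z = (\<lambda>x y. 0)"
    using Z mat_mul_one_right[OF fin supp(2)] by simp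
  then show ?thesis
    by (simp add: mat_mul_def)
next
  case (Suc m)
  have "mat_mul V Z (mat_pow V A (Suc m)) = (\<lambda>x y. 0) \<Longrightarrow> ?thesis"
  proof (induction m)
    case 0
    then show ?case
      by (simp add: mat_mul_one_left[OF fin supp(1)])
  next
    case (Suc m)
    have "mat_mul V Z (mat_pow V A (Suc m)) = mat_mul V (mat_mul V Z (mat_pow V A m)) A"
      by (simp add: mat_mul_assoc[OF fin])
    also have "\<dots> = (\<lambda>x y. 0)"
      by (rule mat_mul_sym_square_eq_0D[OF fin supp(1) sym])
        (use Suc.prems in \<open>simp add: mat_mul_assoc[OF fin]\<close>)
    finally show ?case
      by (rule Suc.IH)
  qed
  then show ?thesis
    using Z Suc by simp
qed

lemma linear_recurrence_eventually_zero:
  fixes \<psi> b :: "nat \<Rightarrow> 'r::idom"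
  assumes lead: "b 0 \<noteq> 0" and rec: "\<And>s. (\<Sum>i\<le>d. b i * \<psi> (i + s)) = 0"
    and eventually: "\<And>s. s \<ge> s0 \<Longrightarrow> \<psi> s = 0"
  shows "\<psi> s = 0"
proof -
  have "\<forall>t\<ge>s. \<psi> t = 0" if "s \<le> s0" for s
    using that
  proof (induction rule: inc_induct)
    case base
    then show ?case
      using eventually by blast
  next
    case (step s)
    have "b 0 * \<psi> s + (\<Sum>i\<in>{1..d}. b i * \<psi> (i + s)) = 0"
      using rec[of s] by (simp add: atMost_atLeast0 sum.atLeast_Suc_atMost)
    moreover have "(\<Sum>i\<in>{1..d}. b i * \<psi> (i + s)) = 0"
      using step.IH by (intro sum.neutral) auto
    ultimately have "\<psi> s = 0"
      using lead by simp
    then show ?case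
      using step.IH by (metis le_antisym not_less_eq_eq)
  qed
  then show ?thesis
    using eventually by (cases "s \<le> s0") auto
qed

text \<open>Among the first \<open>card (V \<times> V) + 1\<close> even powers of \<open>A\<close> there is a linear relation;
  cancelling its lowest power \<open>A\<^bsup>2r\<^esup>\<close> by the previous lemma gives a relation with nonzero
  constant term that still annihilates \<open>A\<close>.\<close>

lemma sym_mat_even_powers_relation:
  fixes A :: "('v, 'r::linordered_field) mat"
  assumes fin: "finite V" and supp: "supported_on V A" and sym: "\<And>x y. A x y = A y x"
  obtains b d where "b 0 \<noteq> 0"
    and "mat_mul V (\<lambda>x y. \<Sum>i\<le>d. b i * mat_pow V A (2 * i) x y) A = (\<lambda>x y. 0)"
proof -
  define D where "D = card (V \<times> V)"
  obtain c where c_nz: "\<exists>i\<le>D. c i \<noteq> 0"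
    and c_rel: "\<And>x y. (\<Sum>i\<le>D. c i * mat_pow V A (2 * i) x y) = 0"
    using supported_matrices_dependent[OF fin, of "\<lambda>i. mat_pow V A (2 * i)"]
      supported_on_mat_pow[OF supp] unfolding D_def by blast
  define r where "r = (LEAST i. c i \<noteq> 0)"
  obtain i0 where "i0 \<le> D" "c i0 \<noteq> 0"
    using c_nz by blast
  have "c r \<noteq> 0"
    unfolding r_def by (rule LeastI) fact
  have "r \<le> i0"
    unfolding r_def by (rule Least_le) fact
  with \<open>i0 \<le> D\<close> have "r \<le> D"
    by simp
  have below_r: "c i = 0" if "i < r" for i
    using not_less_Least[of i "\<lambda>i. c i \<noteq> 0"] that unfolding r_def by simp
  define b where "b i = c (i + r)" for i
  define Y where "Y = (\<lambda>x y. \<Sum>i\<le>D - r. b i * mat_pow V A (2 * i) x y)"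
  have shift: "(\<Sum>i\<le>D - r. b i * mat_pow V A (2 * i + 2 * r) x y) = (\<Sum>i\<le>D. c i * mat_pow V A (2 * i) x y)"
    for x y
  proof -
    have "(\<Sum>i\<le>D - r. b i * mat_pow V A (2 * i + 2 * r) x y) = (\<Sum>i\<in>{r..D}. c i * mat_pow V A (2 * i) x y)"
      using sum.shift_bounds_cl_nat_ivl[of "\<lambda>i. c i * mat_pow V A (2 * i) x y" 0 r "D - r"] \<open>r \<le> D\<close>
      by (simp add: b_def atMost_atLeast0 algebra_simps)
    also have "\<dots> = (\<Sum>i\<le>D. c i * mat_pow V A (2 * i) x y)"
      by (rule sum.mono_neutral_left) (auto simp: below_r)
    finally show ?thesis .
  qed
  have "mat_mul V Y (mat_pow V A (2 * r)) = (\<lambda>x y. 0)"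
    unfolding Y_def mat_mul_sum_left by (simp add: mat_pow_add[OF fin supp, symmetric] shift c_rel)
  then have "mat_mul V Y A = (\<lambda>x y. 0)"
    by (rule mat_mul_sym_pow_eq_0D[OF fin supp _ sym, rotated])
      (use supported_on_mat_pow[OF supp] in \<open>auto simp: Y_def supported_on_def\<close>)
  then show thesis
    using \<open>c r \<noteq> 0\<close> by (intro that[of b "D - r"]) (simp_all add: b_def Y_def)
qed

text \<open>The pairings of the odd powers with \<open>N\<close> satisfy the corresponding linear recurrence, which
  propagates their eventual vanishing back to \<open>A\<^sup>1\<close>.\<close>

lemma mat_inner_eq_0_if_odd_powers:
  fixes A N :: "('v, 'r::linordered_field) mat"
  assumes fin: "finite V" and supp: "supported_on V A" and sym: "\<And>x y. A x y = A y x"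
    and odd: "\<And>j. j \<ge> j0 \<Longrightarrow> mat_inner V (mat_pow V A (2 * j + 1)) N = 0"
  shows "mat_inner V A N = 0"
proof -
  obtain b d where "b 0 \<noteq> 0"
    and YA: "mat_mul V (\<lambda>x y. \<Sum>i\<le>d. b i * mat_pow V A (2 * i) x y) A = (\<lambda>x y. 0)"
    using sym_mat_even_powers_relation[OF fin supp sym] .
  define Y where "Y = (\<lambda>x y. \<Sum>i\<le>d. b i * mat_pow V A (2 * i) x y)"
  have Y_shift: "mat_mul V Y (mat_pow V A n) = (\<lambda>x y. \<Sum>i\<le>d. b i * mat_pow V A (2 * i + n) x y)" for n
    unfolding Y_def mat_mul_sum_left by (simp add: mat_pow_add[OF fin supp])
  define \<psi> where "\<psi> s = mat_inner V (mat_pow V A (2 * s + 1)) N" for s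
  have "\<psi> 0 = 0"
  proof (rule linear_recurrence_eventually_zero)
    show "b 0 \<noteq> 0" by fact
    show "\<psi> s = 0" if "s \<ge> j0" for s
      using odd[OF that] by (simp add: \<psi>_def)
    fix s
    have "(\<Sum>i\<le>d. b i * \<psi> (i + s)) = mat_inner V (mat_mul V Y (mat_pow V A (2 * s + 1))) N"
      unfolding Y_shift mat_inner_sum_left by (simp add: \<psi>_def algebra_simps)
    also have "\<dots> = mat_inner V (mat_mul V (mat_mul V Y A) (mat_pow V A (2 * s))) N"
      by (simp only: mat_mul_assoc[OF fin] Suc_eq_plus1[symmetric] mat_pow_Suc_left[OF fin supp])
    also have "\<dots> = 0"
      unfolding YA[folded Y_def] by (simp add: mat_mul_def mat_inner_def)
    finally show "(\<Sum>i\<le>d. b i * \<psi> (i + s)) = 0" .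
  qed
  then show ?thesis
    by (simp add: \<psi>_def mat_mul_one_left[OF fin supp])
qed

section \<open>Walk counts\<close>

lemma simple_graph_wf: "simple_graph G \<Longrightarrow> wf_graph G"
  unfolding simple_graph_def by simp

lemma wf_graph_finite_verts: "wf_graph G \<Longrightarrow> finite (verts G)"
  unfolding wf_graph_def by simp

lemma wf_graph_edge_subset: "wf_graph G \<Longrightarrow> e \<in> edges G \<Longrightarrow> e \<subseteq> verts G"
  unfolding wf_graph_def by simp

lemma wf_graph_finite_edges: "wf_graph G \<Longrightarrow> finite (edges G)"
  by (metis Pow_iff finite_Pow_iff finite_subset subsetI wf_graph_edge_subset wf_graph_finite_verts)

lemma simple_graph_edge:
  assumes "simple_graph F" "e \<in> edges F"
  obtains a b where "e = {a, b}" "a \<noteq> b" "a \<in> verts F" "b \<in> verts F"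
  using assms unfolding simple_graph_def wf_graph_def by (metis card_2_iff insert_subset)

definition adj :: "'a graph \<Rightarrow> ('a, nat) mat"
  where "adj G x y = of_bool ({x, y} \<in> edges G)"

definition walks :: "'a graph \<Rightarrow> nat \<Rightarrow> ('a, nat) mat"
  where "walks G n = mat_pow (verts G) (adj G) n"

lemma adj_sym: "adj G x y = adj G y x"
  unfolding adj_def by (simp add: insert_commute)

lemma supported_on_adj: "wf_graph G \<Longrightarrow> supported_on (verts G) (adj G)"
  unfolding supported_on_def adj_def by (auto dest: wf_graph_edge_subset)

lemma walks_0: "x \<in> verts G \<Longrightarrow> walks G 0 x x = 1"
  by (simp add: walks_def mat_one_def)

lemma walks_1: "wf_graph G \<Longrightarrow> walks G 1 = adj G"
  unfolding walks_def by (intro mat_pow_1 wf_graph_finite_verts supported_on_adj)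

lemma walks_Suc: "walks G (Suc n) x y = (\<Sum>z\<in>verts G. walks G n x z * adj G z y)"
  by (simp add: walks_def mat_mul_def)

lemma walks_Suc_left:
  "wf_graph G \<Longrightarrow> walks G (Suc n) x y = (\<Sum>z\<in>verts G. adj G x z * walks G n z y)"
  unfolding walks_def
  by (subst mat_pow_Suc_left) (simp_all add: wf_graph_finite_verts supported_on_adj mat_mul_def)

lemma walks_add:
  "wf_graph G \<Longrightarrow> walks G (m + n) x y = (\<Sum>z\<in>verts G. walks G m x z * walks G n z y)"
  unfolding walks_def
  by (simp add: mat_pow_add wf_graph_finite_verts supported_on_adj mat_mul_def)

lemma walks_sym:
  assumes "wf_graph G" shows "walks G n x y = walks G n y x"
proof (induction n arbitrary: x y)
  case 0
  then show ?case
    by (auto simp: walks_def mat_one_def)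
next
  case (Suc n)
  have "walks G (Suc n) x y = (\<Sum>z\<in>verts G. adj G y z * walks G n z x)"
    unfolding walks_Suc by (intro sum.cong refl) (simp add: Suc.IH[of x] adj_sym[of G _ y])
  then show ?case
    by (simp add: walks_Suc_left[OF assms])
qed

lemma walks_pos_imp_verts:
  assumes "wf_graph G" "walks G n x y > 0" shows "x \<in> verts G" "y \<in> verts G"
  using assms supported_on_mat_pow[OF supported_on_adj[OF assms(1)], of n]
  unfolding walks_def supported_on_def by (metis less_irrefl)+

lemma walks_pos_trans:
  assumes G: "wf_graph G" and "walks G m x z > 0" "walks G n z y > 0"
  shows "walks G (m + n) x y > 0"
proof -
  have "z \<in> verts G"
    using walks_pos_imp_verts[OF G assms(2)] by simp
  then have "walks G m x z * walks G n z y \<le> walks G (m + n) x y"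
    unfolding walks_add[OF G]
    by (intro member_le_sum) (simp_all add: wf_graph_finite_verts[OF G])
  then show ?thesis
    using assms(2,3) by (metis mult_pos_pos order_less_le_trans)
qed

lemma walks_1_pos_iff:
  assumes "wf_graph G" shows "walks G 1 x y > 0 \<longleftrightarrow> {x, y} \<in> edges G"
  unfolding walks_1[OF assms] adj_def by simp

lemma wf_graph_edge_doubleton:
  assumes "wf_graph G" "e \<in> edges G" shows "\<exists>a b. e = {a, b}"
proof -
  have "card e = 1 \<or> card e = 2"
    using assms unfolding wf_graph_def by blast
  then show ?thesis
  proof
    assume "card e = 1"
    then obtain a where "e = {a, a}"
      by (auto simp: card_1_singleton_iff)
    then show ?thesis
      by blast
  qed (auto simp: card_2_iff)
qed

definition walk_root :: "'a graph \<Rightarrow> 'a \<Rightarrow> 'a"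
  where "walk_root G x = (SOME r. \<exists>n. walks G n x r > 0)"

lemma walk_root_walk: "x \<in> verts G \<Longrightarrow> \<exists>n. walks G n x (walk_root G x) > 0"
  unfolding walk_root_def by (rule someI[of _ x], rule exI[of _ 0]) (simp add: walks_0)

lemma walk_root_eq:
  assumes G: "wf_graph G" and walk: "walks G n x y > 0"
  shows "walk_root G x = walk_root G y"
proof -
  have "walks G n y x > 0"
    using walk by (subst walks_sym[OF G])
  then have "(\<exists>m. walks G m x r > 0) \<longleftrightarrow> (\<exists>m. walks G m y r > 0)" for r
    using walks_pos_trans[OF G walk] walks_pos_trans[OF G \<open>walks G n y x > 0\<close>] by blast
  then show ?thesis
    unfolding walk_root_def by simp
qed

text \<open>Colour each vertex by the parity of its walks to the root of its component.\<close>

lemma bipartite_if_closed_walks_even: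
  assumes K: "wf_graph K" and even_closed: "\<And>c k. walks K k c c > 0 \<Longrightarrow> even k"
  shows "bipartite K"
proof -
  have same_parity: "even m \<longleftrightarrow> even n" if "walks K m x z > 0" "walks K n x z > 0" for m n x z
  proof -
    have "walks K n z x > 0"
      using that(2) by (subst walks_sym[OF K])
    then show ?thesis
      using even_closed[OF walks_pos_trans[OF K that(1)]] by simp
  qed
  define col where "col x \<longleftrightarrow> (\<exists>n. even n \<and> walks K n x (walk_root K x) > 0)" for x
  have col_iff: "col x \<longleftrightarrow> even n" if "walks K n x (walk_root K x) > 0" for n x
    unfolding col_def using same_parity[OF _ that] that by blast
  have col_edge: "col a \<noteq> col b" if "{a, b} \<in> edges K" for a b
  proof -
    have ab: "walks K 1 a b > 0" "walks K 1 b a > 0"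
      using that walks_1_pos_iff[OF K] by (auto simp: insert_commute)
    obtain n where n: "walks K n a (walk_root K a) > 0"
      using walk_root_walk[OF walks_pos_imp_verts(1)[OF K ab(1)]] by blast
    then have "walks K (1 + n) b (walk_root K b) > 0"
      using walks_pos_trans[OF K ab(2) n] walk_root_eq[OF K ab(1)] by simp
    then show ?thesis
      using col_iff n by auto
  qed
  show ?thesis
    unfolding bipartite_def
  proof (intro exI[of _ col] ballI)
    fix e
    assume "e \<in> edges K"
    then obtain a b where "e = {a, b}"
      using wf_graph_edge_doubleton[OF K] by blast
    then show "\<exists>x y. e = {x, y} \<and> col x \<noteq> col y"
      using col_edge \<open>e \<in> edges K\<close> by blast
  qed
qed

corollary not_bipartite_imp_odd_closed_walk:
  assumes "wf_graph K" "\<not> bipartite K" shows "\<exists>c k. odd k \<and> walks K k c c > 0"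
  using bipartite_if_closed_walks_even assms by blast

lemma odd_closed_walks_from:
  assumes K: "wf_graph K" and walk: "walks K k c c > 0" and "odd k" "odd n" "k \<le> n"
  shows "walks K n c c > 0"
proof -
  obtain k' where k': "k = Suc k'"
    using \<open>odd k\<close> by (cases k) auto
  then have "(\<Sum>z\<in>verts K. adj K c z * walks K k' z c) \<noteq> 0"
    using walk by (simp add: walks_Suc_left[OF K])
  then obtain z where "adj K c z * walks K k' z c \<noteq> 0"
    by (meson sum.neutral)
  then have "walks K 1 c z > 0"
    unfolding walks_1[OF K] by simp
  moreover have "walks K 1 z c > 0"
    using \<open>walks K 1 c z > 0\<close> by (subst walks_sym[OF K])
  ultimately have two: "walks K (1 + 1) c c > 0"
    by (rule walks_pos_trans[OF K])
  have walk_k: "walks K (k + 2 * t) c c > 0" for t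
  proof (induction t)
    case 0
    then show ?case
      using walk by simp
  next
    case (Suc t)
    then show ?case
      using walks_pos_trans[OF K Suc two] by (simp add: add.assoc)
  qed
  have "\<exists>t. n = k + 2 * t"
    using assms(3-5) by presburger
  then show ?thesis
    using walk_k by auto
qed

section \<open>Homomorphisms from subdivisions\<close>

definition ends :: "'a set \<Rightarrow> 'a \<times> 'a"
  where "ends e = (SOME p. e = {fst p, snd p})"

text \<open>\<open>hom_walks F l G\<close> counts the homomorphisms into \<open>G\<close> from \<open>F\<close> with each edge \<open>e\<close>
  subdivided into a path of length \<open>l e\<close>. The orientation of each edge chosen by \<open>ends\<close> is
  irrelevant since walk counts are symmetric.\<close>

definition hom_walks :: "'v graph \<Rightarrow> ('v set \<Rightarrow> nat) \<Rightarrow> 'a graph \<Rightarrow> nat"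
  where "hom_walks F l G = (\<Sum>f \<in> verts F \<rightarrow>\<^sub>E verts G.
    \<Prod>e \<in> edges F. walks G (l e) (f (fst (ends e))) (f (snd (ends e))))"

lemma ends_doubleton: "{fst (ends {a, b}), snd (ends {a, b})} = {a, b}"
  unfolding ends_def by (rule someI2[of _ "(a, b)"]) auto

lemma walks_ends:
  assumes "wf_graph G"
  shows "walks G n (f (fst (ends {a, b}))) (f (snd (ends {a, b}))) = walks G n (f a) (f b)"
  using ends_doubleton[of a b] walks_sym[OF assms] by (auto simp: doubleton_eq_iff)

lemma simple_graph_ends:
  assumes "simple_graph F" "e \<in> edges F"
  shows "e = {fst (ends e), snd (ends e)}" "fst (ends e) \<noteq> snd (ends e)"
    "fst (ends e) \<in> verts F" "snd (ends e) \<in> verts F"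
proof -
  obtain a b where ab: "e = {a, b}" "a \<noteq> b" "a \<in> verts F" "b \<in> verts F"
    using simple_graph_edge[OF assms] .
  then have "{fst (ends e), snd (ends e)} = {a, b}"
    using ends_doubleton by simp
  then show "e = {fst (ends e), snd (ends e)}" "fst (ends e) \<noteq> snd (ends e)"
    "fst (ends e) \<in> verts F" "snd (ends e) \<in> verts F"
    using ab by (auto simp: doubleton_eq_iff)
qed

lemma hom_walks_cong:
  "(\<And>e. e \<in> edges F \<Longrightarrow> l e = m e) \<Longrightarrow> hom_walks F l G = hom_walks F m G"
  unfolding hom_walks_def by (intro sum.cong prod.cong) auto

lemma prod_of_bool:
  "finite A \<Longrightarrow> (\<Prod>x\<in>A. of_bool (P x) :: 'a::comm_semiring_1) = of_bool (\<forall>x\<in>A. P x)"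
  by (induction A rule: finite_induct) auto

lemma hom_eq_hom_walks_1:
  assumes F: "simple_graph F" and G: "wf_graph G"
  shows "hom F G = hom_walks F (\<lambda>_. 1) G"
proof -
  have "walks G 1 (f (fst (ends e))) (f (snd (ends e))) = of_bool (f ` e \<in> edges G)"
    if e: "e \<in> edges F" for f e
  proof -
    obtain a b where "e = {a, b}"
      using simple_graph_edge[OF F e] by metis
    then show ?thesis
      using walks_ends[OF G, of 1 f a b] walks_1[OF G] by (simp add: adj_def)
  qed
  then have "hom_walks F (\<lambda>_. 1) G = (\<Sum>f \<in> verts F \<rightarrow>\<^sub>E verts G. of_bool (\<forall>e\<in>edges F. f ` e \<in> edges G))"
    unfolding hom_walks_def
    by (simp add: prod_of_bool wf_graph_finite_edges[OF simple_graph_wf[OF F]] cong: prod.cong)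
  also have "\<dots> = hom F G"
    unfolding hom_def homs_def
    using wf_graph_finite_verts[OF G] wf_graph_finite_verts[OF simple_graph_wf[OF F]]
    by (simp add: finite_PiE Int_def)
  finally show ?thesis ..
qed

lemma hom_walks_pos:
  assumes F: "simple_graph F" and K: "wf_graph K" and c: "c \<in> verts K"
    and pos: "\<And>e. e \<in> edges F \<Longrightarrow> walks K (l e) c c > 0"
  shows "hom_walks F l K > 0"
proof -
  define f where "f = (\<lambda>x \<in> verts F. c)"
  have f: "f \<in> verts F \<rightarrow>\<^sub>E verts K"
    using c by (simp add: f_def)
  have "0 < (\<Prod>e\<in>edges F. walks K (l e) (f (fst (ends e))) (f (snd (ends e))))"
    using pos simple_graph_ends(3,4)[OF F] by (intro prod_pos) (simp add: f_def)
  also have "\<dots> \<le> hom_walks F l K"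
    unfolding hom_walks_def
    using f wf_graph_finite_verts[OF simple_graph_wf[OF F]] wf_graph_finite_verts[OF K]
    by (intro member_le_sum) (simp_all add: finite_PiE)
  finally show ?thesis .
qed

definition hom_walks_at :: "'v graph \<Rightarrow> ('v set \<Rightarrow> nat) \<Rightarrow> 'v set \<Rightarrow> 'a graph \<Rightarrow> ('a, nat) mat"
  where "hom_walks_at F l e0 G x y =
    (\<Sum>f \<in> {f \<in> verts F \<rightarrow>\<^sub>E verts G. (f (fst (ends e0)), f (snd (ends e0))) = (x, y)}.
      \<Prod>e \<in> edges F - {e0}. walks G (l e) (f (fst (ends e))) (f (snd (ends e))))"

lemma hom_walks_update_eq_mat_inner:
  assumes F: "simple_graph F" and e0: "e0 \<in> edges F" and G: "wf_graph G"
  shows "hom_walks F (l(e0 := n)) G = mat_inner (verts G) (walks G n) (hom_walks_at F l e0 G)"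
proof -
  define u v where "u = fst (ends e0)" and "v = snd (ends e0)"
  define R where "R f = (\<Prod>e \<in> edges F - {e0}. walks G (l e) (f (fst (ends e))) (f (snd (ends e))))"
    for f :: "'a \<Rightarrow> 'b"
  have fin_maps: "finite (verts F \<rightarrow>\<^sub>E verts G)"
    using wf_graph_finite_verts[OF simple_graph_wf[OF F]] wf_graph_finite_verts[OF G]
    by (simp add: finite_PiE)
  have "hom_walks F (l(e0 := n)) G = (\<Sum>f \<in> verts F \<rightarrow>\<^sub>E verts G. walks G n (f u) (f v) * R f)"
    unfolding hom_walks_def u_def v_def R_def
    by (intro sum.cong refl)
      (auto simp: prod.remove[OF wf_graph_finite_edges[OF simple_graph_wf[OF F]] e0] intro!: prod.cong)
  also have "\<dots> = (\<Sum>p \<in> verts G \<times> verts G.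
      \<Sum>f \<in> {f \<in> verts F \<rightarrow>\<^sub>E verts G. (f u, f v) = p}. walks G n (f u) (f v) * R f)"
    using simple_graph_ends(3,4)[OF F e0] fin_maps wf_graph_finite_verts[OF G]
    by (intro sum.group[symmetric]) (auto simp: u_def v_def)
  also have "\<dots> = mat_inner (verts G) (walks G n) (hom_walks_at F l e0 G)"
    unfolding mat_inner_def hom_walks_at_def sum.cartesian_product'
    by (intro sum.cong refl) (auto simp: u_def v_def R_def sum_distrib_left)
  finally show ?thesis .
qed

lemma sum_PiE_insert:
  assumes "x \<notin> S"
  shows "(\<Sum>g \<in> insert x S \<rightarrow>\<^sub>E T. h g) = (\<Sum>y \<in> T. \<Sum>g \<in> S \<rightarrow>\<^sub>E T. h (g(x := y)))"
  unfolding PiE_insert_eq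
  by (subst sum.reindex[OF inj_combinator[OF assms]]) (simp add: sum.cartesian_product')

lemma path_edges_three: "path_edges [u, w, v] = {{u, w}, {w, v}}"
  unfolding path_edges_def
  by (auto simp: less_Suc_eq, rule exI[of _ 0], simp, rule exI[of _ 1], simp)

lemma edges_subdivide_edge_single:
  "edges (subdivide_edge F u v [w]) = insert {u, w} (insert {w, v} (edges F - {{u, v}}))"
  by (auto simp: subdivide_edge_def path_edges_three)

lemma hom_walks_subdivide_edge_single:
  assumes F: "simple_graph F" and G: "wf_graph G"
    and e: "{u, v} \<in> edges F" "u \<noteq> v" and w: "w \<notin> verts F"
  shows "hom_walks (subdivide_edge F u v [w]) l G = hom_walks F (l({u, v} := l {u, w} + l {w, v})) G"
proof -
  define E where "E = edges F - {{u, v}}"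
  define T where "T f p = walks G (l p) (f (fst (ends p))) (f (snd (ends p)))" for f :: "'a \<Rightarrow> 'b" and p
  have uv: "u \<in> verts F" "v \<in> verts F"
    using e(1) wf_graph_edge_subset[OF simple_graph_wf[OF F]] by auto
  have E_verts: "p \<subseteq> verts F" if "p \<in> E" for p
    using that wf_graph_edge_subset[OF simple_graph_wf[OF F]] by (auto simp: E_def)
  have fin_E: "finite E"
    using wf_graph_finite_edges[OF simple_graph_wf[OF F]] by (simp add: E_def)
  have new_edges: "{u, w} \<notin> insert {w, v} E" "{w, v} \<notin> E"
    using E_verts w e(2) by (auto simp: doubleton_eq_iff)
  have T_upd: "T (g(w := z)) p = T g p" if "p \<in> E" for g z p
    using that w simple_graph_ends(3,4)[OF F] by (auto simp: T_def E_def)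
  have T_new: "T (g(w := z)) {u, w} = walks G (l {u, w}) (g u) z"
    "T (g(w := z)) {w, v} = walks G (l {w, v}) z (g v)" for g z
    using w uv unfolding T_def walks_ends[OF G] by auto
  have "hom_walks (subdivide_edge F u v [w]) l G
      = (\<Sum>f \<in> insert w (verts F) \<rightarrow>\<^sub>E verts G. T f {u, w} * (T f {w, v} * (\<Prod>p\<in>E. T f p)))"
    using new_edges fin_E
    by (simp add: hom_walks_def subdivide_edge_def path_edges_three E_def T_def insert_commute)
  also have "\<dots> = (\<Sum>z \<in> verts G. \<Sum>g \<in> verts F \<rightarrow>\<^sub>E verts G.
      walks G (l {u, w}) (g u) z * walks G (l {w, v}) z (g v) * (\<Prod>p\<in>E. T g p))"
    using w by (simp add: sum_PiE_insert T_new T_upd mult.assoc cong: prod.cong)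
  also have "\<dots> = (\<Sum>g \<in> verts F \<rightarrow>\<^sub>E verts G. walks G (l {u, w} + l {w, v}) (g u) (g v) * (\<Prod>p\<in>E. T g p))"
    by (subst sum.swap) (simp add: walks_add[OF G] sum_distrib_right)
  also have "\<dots> = hom_walks F (l({u, v} := l {u, w} + l {w, v})) G"
    unfolding hom_walks_def
    by (intro sum.cong refl)
      (auto simp: prod.remove[OF wf_graph_finite_edges[OF simple_graph_wf[OF F]] e(1)]
        E_def T_def walks_ends[OF G] intro!: prod.cong)
  finally show ?thesis .
qed

text \<open>\<open>G\<close> and \<open>H\<close> are handled at once through the block-diagonal adjacency matrix of their
  disjoint union, paired with \<open>hom_walks_at\<close> for \<open>G\<close> and minus \<open>hom_walks_at\<close> for \<open>H\<close>.\<close>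

lemma hom_walks_update_1_if_odd:
  fixes F :: "'v graph" and G H :: "'a graph"
  assumes F: "simple_graph F" and e0: "e0 \<in> edges F" and G: "wf_graph G" and H: "wf_graph H"
    and odd: "\<And>n. odd n \<Longrightarrow> n \<ge> k \<Longrightarrow> hom_walks F (l(e0 := n)) G = hom_walks F (l(e0 := n)) H"
  shows "hom_walks F (l(e0 := 1)) G = hom_walks F (l(e0 := 1)) H"
proof -
  define V where "V = verts G <+> verts H"
  define A :: "('a + 'a, real) mat"
    where "A = mat_diag_sum (\<lambda>x y. real (adj G x y)) (\<lambda>x y. real (adj H x y))"
  define N :: "('a + 'a, real) mat"
    where "N = mat_diag_sum (\<lambda>x y. real (hom_walks_at F l e0 G x y))
      (\<lambda>x y. - real (hom_walks_at F l e0 H x y))"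
  have fin: "finite (verts G)" "finite (verts H)" "finite V"
    using wf_graph_finite_verts[OF G] wf_graph_finite_verts[OF H] by (simp_all add: V_def)
  have supp: "supported_on V A"
    using supported_on_adj[OF G] supported_on_adj[OF H]
    by (auto simp: supported_on_def V_def A_def mat_diag_sum_def split: sum.split; metis gr_implies_not0)
  have sym: "A p q = A q p" for p q
    by (auto simp: A_def mat_diag_sum_def adj_sym split: sum.split)
  have real_hom_walks: "real (hom_walks F (l(e0 := n)) X) = mat_inner (verts X)
      (mat_pow (verts X) (\<lambda>x y. real (adj X x y)) n) (\<lambda>x y. real (hom_walks_at F l e0 X x y))"
    if "wf_graph X" for X :: "'a graph" and n
    by (simp add: hom_walks_update_eq_mat_inner[OF F e0 that] mat_inner_def walks_def of_nat_mat_pow)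
  have key: "mat_inner V (mat_pow V A n) N
      = real (hom_walks F (l(e0 := n)) G) - real (hom_walks F (l(e0 := n)) H)" for n
    unfolding V_def A_def N_def mat_pow_diag_sum[OF fin(1,2)] mat_inner_diag_sum[OF fin(1,2)]
      real_hom_walks[OF G] real_hom_walks[OF H]
    by (simp add: mat_inner_def sum_negf)
  have "mat_inner V A N = 0"
    by (rule mat_inner_eq_0_if_odd_powers[OF fin(3) supp sym, of k]) (subst key, simp add: odd)
  then show ?thesis
    using key[of 1] mat_pow_1[OF fin(3) supp] by simp
qed

lemma hom_walks_1_if_odd:
  fixes F :: "'v graph" and G H :: "'a graph"
  assumes F: "simple_graph F" and G: "wf_graph G" and H: "wf_graph H"
    and odd: "\<And>l. \<forall>e\<in>edges F. odd (l e) \<and> l e \<ge> k \<Longrightarrow> hom_walks F l G = hom_walks F l H"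
  shows "hom_walks F (\<lambda>_. 1) G = hom_walks F (\<lambda>_. 1) H"
proof -
  have "\<forall>l. (\<forall>e\<in>edges F - D. odd (l e) \<and> l e \<ge> k) \<and> (\<forall>e\<in>D. l e = 1)
      \<longrightarrow> hom_walks F l G = hom_walks F l H" if "finite D" "D \<subseteq> edges F" for D
    using that
  proof (induction D rule: finite_induct)
    case empty
    then show ?case
      using odd by simp
  next
    case (insert e0 D)
    show ?case
    proof (intro allI impI)
      fix l
      assume l: "(\<forall>e\<in>edges F - insert e0 D. odd (l e) \<and> l e \<ge> k) \<and> (\<forall>e\<in>insert e0 D. l e = 1)"
      have e0: "e0 \<in> edges F"
        using insert.prems by simp
      have IH: "\<forall>l. (\<forall>e\<in>edges F - D. odd (l e) \<and> l e \<ge> k) \<and> (\<forall>e\<in>D. l e = 1)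
          \<longrightarrow> hom_walks F l G = hom_walks F l H"
        using insert.IH insert.prems by simp
      have "hom_walks F (l(e0 := 1)) G = hom_walks F (l(e0 := 1)) H"
      proof (rule hom_walks_update_1_if_odd[OF F e0 G H, where k = k])
        fix n
        assume "odd n" "n \<ge> k"
        then show "hom_walks F (l(e0 := n)) G = hom_walks F (l(e0 := n)) H"
          using l insert.hyps(2) by (intro IH[rule_format]) auto
      qed
      moreover have "l(e0 := 1) = l"
        using l by auto
      ultimately show "hom_walks F l G = hom_walks F l H"
        by simp
    qed
  qed
  then show ?thesis
    using wf_graph_finite_edges[OF simple_graph_wf[OF F]] by simp
qed

section \<open>Products\<close>

lemma edge_graph_prod_iff:
  "{p, q} \<in> edges (graph_prod G K) \<longleftrightarrow> {fst p, fst q} \<in> edges G \<and> {snd p, snd q} \<in> edges K"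
proof
  assume "{p, q} \<in> edges (graph_prod G K)"
  then obtain g g' k k' where "{p, q} = {(g, k), (g', k')}" "{g, g'} \<in> edges G" "{k, k'} \<in> edges K"
    unfolding graph_prod_def by auto
  then show "{fst p, fst q} \<in> edges G \<and> {snd p, snd q} \<in> edges K"
    by (auto simp: doubleton_eq_iff insert_commute)
next
  assume "{fst p, fst q} \<in> edges G \<and> {snd p, snd q} \<in> edges K"
  then show "{p, q} \<in> edges (graph_prod G K)"
    unfolding graph_prod_def by (cases p; cases q) auto
qed

lemma mem_homs_iff:
  assumes "simple_graph F"
  shows "f \<in> homs F G \<longleftrightarrow>
    f \<in> verts F \<rightarrow>\<^sub>E verts G \<and> (\<forall>a b. {a, b} \<in> edges F \<longrightarrow> {f a, f b} \<in> edges G)"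
proof -
  have "(\<forall>e\<in>edges F. f ` e \<in> edges G) \<longleftrightarrow> (\<forall>a b. {a, b} \<in> edges F \<longrightarrow> {f a, f b} \<in> edges G)"
  proof (intro iffI allI impI ballI)
    fix e
    assume "\<forall>a b. {a, b} \<in> edges F \<longrightarrow> {f a, f b} \<in> edges G" "e \<in> edges F"
    moreover obtain a b where "e = {a, b}"
      using simple_graph_edge[OF assms \<open>e \<in> edges F\<close>] by metis
    ultimately show "f ` e \<in> edges G"
      by simp
  qed auto
  then show ?thesis
    unfolding homs_def by blast
qed

lemma verts_graph_prod [simp]: "verts (graph_prod G K) = verts G \<times> verts K"
  by (simp add: graph_prod_def)

lemma hom_graph_prod:
  assumes F: "simple_graph F"
  shows "hom F (graph_prod G K) = hom F G * hom F K"
proof -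
  define pair where "pair gh = (\<lambda>x \<in> verts F. (fst gh x, snd gh x))" for gh :: "('a \<Rightarrow> 'b) \<times> ('a \<Rightarrow> 'c)"
  define split where "split f = ((\<lambda>x \<in> verts F. fst (f x)), (\<lambda>x \<in> verts F. snd (f x)))"
    for f :: "'a \<Rightarrow> 'b \<times> 'c"
  have edge_verts: "a \<in> verts F" "b \<in> verts F" if "{a, b} \<in> edges F" for a b
    using that wf_graph_edge_subset[OF simple_graph_wf[OF F]] by auto
  have "bij_betw pair (homs F G \<times> homs F K) (homs F (graph_prod G K))"
  proof (rule bij_betw_byWitness[where f' = split])
    show "\<forall>gh \<in> homs F G \<times> homs F K. split (pair gh) = gh"
      by (auto simp: pair_def split_def homs_def fun_eq_iff PiE_def extensional_def)
    show "\<forall>f \<in> homs F (graph_prod G K). pair (split f) = f"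
      by (auto simp: pair_def split_def homs_def fun_eq_iff PiE_def extensional_def)
    show "pair ` (homs F G \<times> homs F K) \<subseteq> homs F (graph_prod G K)"
    proof safe
      fix g h
      assume g: "g \<in> homs F G" and h: "h \<in> homs F K"
      have "{pair (g, h) a, pair (g, h) b} \<in> edges (graph_prod G K)" if "{a, b} \<in> edges F" for a b
        using g h that edge_verts[OF that] by (simp add: pair_def edge_graph_prod_iff mem_homs_iff[OF F])
      moreover have "pair (g, h) \<in> verts F \<rightarrow>\<^sub>E verts (graph_prod G K)"
        using g h by (auto simp: pair_def homs_def)
      ultimately show "pair (g, h) \<in> homs F (graph_prod G K)"
        by (simp add: mem_homs_iff[OF F])
    qed
    show "split ` homs F (graph_prod G K) \<subseteq> homs F G \<times> homs F K"
    proof (rule image_subsetI)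
      fix f
      assume f: "f \<in> homs F (graph_prod G K)"
      then have "{f a, f b} \<in> edges (graph_prod G K)" if "{a, b} \<in> edges F" for a b
        using that by (simp add: mem_homs_iff[OF F])
      then show "split f \<in> homs F G \<times> homs F K"
        using f edge_verts by (auto simp: split_def edge_graph_prod_iff mem_homs_iff[OF F] PiE_iff)
    qed
  qed
  then show ?thesis
    unfolding hom_def by (simp add: bij_betw_same_card[symmetric] card_cartesian_product)
qed

section \<open>Subdivision-closed classes\<close>

definition fresh_vertex :: "'v graph \<Rightarrow> 'v"
  where "fresh_vertex F = (SOME w. w \<notin> verts F)"

lemma fresh_vertex_notin_if_finite:
  "infinite (UNIV :: 'v set) \<Longrightarrow> finite (verts F) \<Longrightarrow> fresh_vertex F \<notin> verts (F :: 'v graph)"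
  unfolding fresh_vertex_def by (rule someI_ex) (rule ex_new_if_finite)

text \<open>The edge \<open>e\<close> becomes a path of length \<open>n + 1\<close>.\<close>

fun stretch_edge :: "'v graph \<Rightarrow> 'v set \<Rightarrow> nat \<Rightarrow> 'v graph" where
  "stretch_edge F e 0 = F"
| "stretch_edge F e (Suc n) =
    stretch_edge (subdivide_edge F (fst (ends e)) (snd (ends e)) [fresh_vertex F])
      {fresh_vertex F, snd (ends e)} n"

fun stretch_edges :: "'v graph \<Rightarrow> 'v set list \<Rightarrow> ('v set \<Rightarrow> nat) \<Rightarrow> 'v graph" where
  "stretch_edges F [] l = F"
| "stretch_edges F (e # es) l = stretch_edges (stretch_edge F e (l e - 1)) es l"

locale subdivision_closed_class =
  fixes \<F> :: "'v graph set"
  assumes simple: "\<And>F. F \<in> \<F> \<Longrightarrow> simple_graph F"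
    and closed: "closed_under_subdivisions \<F>"
    and infinite_vertices: "infinite (UNIV :: 'v set)"
begin

lemma fresh_vertex_notin: "F \<in> \<F> \<Longrightarrow> fresh_vertex F \<notin> verts F"
  by (intro fresh_vertex_notin_if_finite infinite_vertices wf_graph_finite_verts simple_graph_wf simple)

lemma subdivide_fresh:
  assumes F: "F \<in> \<F>" and e: "e \<in> edges F"
  defines "u \<equiv> fst (ends e)" and "v \<equiv> snd (ends e)" and "w \<equiv> fresh_vertex F"
  shows "subdivide_edge F u v [w] \<in> \<F>" "{w, v} \<in> edges (subdivide_edge F u v [w])"
    "edges F - {e} \<subseteq> edges (subdivide_edge F u v [w]) - {{w, v}}"
proof -
  have uv: "e = {u, v}" "u \<noteq> v" "u \<in> verts F" "v \<in> verts F"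
    using simple_graph_ends[OF simple[OF F] e] by (simp_all add: u_def v_def)
  have w: "w \<notin> verts F"
    unfolding w_def by (rule fresh_vertex_notin[OF F])
  show "subdivide_edge F u v [w] \<in> \<F>"
    using closed F e uv w unfolding closed_under_subdivisions_def by auto
  show "{w, v} \<in> edges (subdivide_edge F u v [w])"
    by (simp add: edges_subdivide_edge_single)
  have "{w, v} \<notin> edges F"
    using w wf_graph_edge_subset[OF simple_graph_wf[OF simple[OF F]]] by blast
  then show "edges F - {e} \<subseteq> edges (subdivide_edge F u v [w]) - {{w, v}}"
    using uv by (auto simp: edges_subdivide_edge_single)
qed

lemma stretch_edge_mem:
  "F \<in> \<F> \<Longrightarrow> e \<in> edges F \<Longrightarrow> stretch_edge F e n \<in> \<F> \<and> edges F - {e} \<subseteq> edges (stretch_edge F e n)"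
proof (induction n arbitrary: F e)
  case 0
  then show ?case
    by auto
next
  case (Suc n)
  then show ?case
    using subdivide_fresh[OF Suc.prems] Suc.IH by fastforce
qed

lemma hom_walks_stretch_edge:
  assumes "F \<in> \<F>" "e \<in> edges F" and G: "wf_graph G"
    and l: "\<And>p. p \<notin> edges F - {e} \<Longrightarrow> l p = 1"
  shows "hom_walks (stretch_edge F e n) l G = hom_walks F (l(e := Suc n)) G"
  using assms(1,2) l
proof (induction n arbitrary: F e)
  case 0
  then have "l(e := 1) = l"
    by fastforce
  then show ?case
    by simp
next
  case (Suc n)
  define u v w where "u = fst (ends e)" and "v = snd (ends e)" and "w = fresh_vertex F"
  define F1 where "F1 = subdivide_edge F u v [w]"
  have F: "simple_graph F"
    using simple Suc.prems(1) .
  have uv: "e = {u, v}" "u \<noteq> v"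
    using simple_graph_ends[OF F Suc.prems(2)] by (simp_all add: u_def v_def)
  have w: "w \<notin> verts F"
    unfolding w_def by (rule fresh_vertex_notin[OF Suc.prems(1)])
  then have new: "{u, w} \<notin> edges F" "{w, v} \<notin> edges F"
    using wf_graph_edge_subset[OF simple_graph_wf[OF F]] by blast+
  have F1: "F1 \<in> \<F>" "{w, v} \<in> edges F1" "edges F - {e} \<subseteq> edges F1 - {{w, v}}"
    using subdivide_fresh[OF Suc.prems(1,2)] by (simp_all add: F1_def u_def v_def w_def)
  have "hom_walks (stretch_edge F1 {w, v} n) l G = hom_walks F1 (l({w, v} := Suc n)) G"
  proof (rule Suc.IH[OF F1(1,2)])
    fix p
    assume "p \<notin> edges F1 - {{w, v}}"
    then show "l p = 1"
      using F1(3) Suc.prems(3) by blast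
  qed
  then have "hom_walks (stretch_edge F e (Suc n)) l G = hom_walks F1 (l({w, v} := Suc n)) G"
    by (simp add: F1_def u_def v_def w_def)
  also have "\<dots> = hom_walks F ((l({w, v} := Suc n))({u, v} :=
      (l({w, v} := Suc n)) {u, w} + (l({w, v} := Suc n)) {w, v})) G"
    unfolding F1_def
    by (rule hom_walks_subdivide_edge_single[OF F G _ uv(2) w]) (use Suc.prems(2) uv(1) in simp)
  also have "\<dots> = hom_walks F (l(e := Suc (Suc n))) G"
    using new uv Suc.prems(3)[of "{u, w}"] by (intro hom_walks_cong) (auto simp: doubleton_eq_iff)
  finally show ?case .
qed

lemma stretch_edges_mem:
  "F \<in> \<F> \<Longrightarrow> set es \<subseteq> edges F \<Longrightarrow> distinct es \<Longrightarrow> stretch_edges F es l \<in> \<F>"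
proof (induction es arbitrary: F)
  case (Cons e es)
  then show ?case
    using stretch_edge_mem[of F e "l e - 1"] by auto
qed simp

lemma hom_stretch_edges:
  assumes "F \<in> \<F>" "set es \<subseteq> edges F" "distinct es" "\<forall>e\<in>set es. l e \<ge> 1" and G: "wf_graph G"
  shows "hom (stretch_edges F es l) G = hom_walks F (\<lambda>e. if e \<in> set es then l e else 1) G"
  using assms(1-4)
proof (induction es arbitrary: F)
  case Nil
  then show ?case
    by (simp add: hom_eq_hom_walks_1 simple G)
next
  case (Cons e es)
  define F1 where "F1 = stretch_edge F e (l e - 1)"
  have e: "e \<in> edges F"
    using Cons.prems(2) by simp
  have F1: "F1 \<in> \<F>" "set es \<subseteq> edges F1"
    using stretch_edge_mem[OF Cons.prems(1) e] Cons.prems(2,3) by (auto simp: F1_def)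
  have "hom (stretch_edges F (e # es) l) G = hom_walks F1 (\<lambda>p. if p \<in> set es then l p else 1) G"
    using Cons.IH[OF F1] Cons.prems(3,4) by (simp add: F1_def)
  also have "\<dots> = hom_walks F ((\<lambda>p. if p \<in> set es then l p else 1)(e := Suc (l e - 1))) G"
    unfolding F1_def using Cons.prems(2,3)
    by (intro hom_walks_stretch_edge[OF Cons.prems(1) e G]) auto
  also have "\<dots> = hom_walks F (\<lambda>p. if p \<in> set (e # es) then l p else 1) G"
    using Cons.prems(4) by (intro hom_walks_cong) auto
  finally show ?case .
qed


lemma hom_stretch_edges_eq_hom_walks:
  assumes "L \<in> \<F>" "set es = edges L" "distinct es" "\<forall>e\<in>edges L. l e \<ge> 1" "wf_graph G"
  shows "hom (stretch_edges L es l) G = hom_walks L l G"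
  using assms by (simp add: hom_stretch_edges cong: hom_walks_cong)

lemma hom_eq_if_hom_eq_on_restrict_class:
  fixes K :: "'k graph" and G H :: "'a graph"
  assumes K: "wf_graph K" "\<not> bipartite K" and G: "wf_graph G" and H: "wf_graph H"
    and eq: "\<And>F. F \<in> \<F> \<Longrightarrow> hom F K > 0 \<Longrightarrow> hom F G = hom F H"
    and L: "L \<in> \<F>"
  shows "hom L G = hom L H"
proof -
  obtain c k where k: "odd k" "walks K k c c > 0"
    using not_bipartite_imp_odd_closed_walk[OF K] by blast
  have c: "c \<in> verts K"
    using walks_pos_imp_verts[OF K(1) k(2)] by simp
  obtain es where es: "set es = edges L" "distinct es"
    using finite_distinct_list[OF wf_graph_finite_edges[OF simple_graph_wf[OF simple[OF L]]]] by blast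
  have "hom_walks L (\<lambda>_. 1) G = hom_walks L (\<lambda>_. 1) H"
  proof (rule hom_walks_1_if_odd[OF simple[OF L] G H, where k = k])
    fix l
    assume l: "\<forall>e\<in>edges L. odd (l e) \<and> l e \<ge> k"
    then have l_pos: "\<forall>e\<in>edges L. l e \<ge> 1"
      using odd_pos by fastforce
    have "hom_walks L l K > 0"
      using l odd_closed_walks_from[OF K(1) k(2) k(1)]
      by (intro hom_walks_pos[OF simple[OF L] K(1) c]) auto
    then have "hom (stretch_edges L es l) G = hom (stretch_edges L es l) H"
      using eq stretch_edges_mem[OF L _ es(2)] es
        hom_stretch_edges_eq_hom_walks[OF L es l_pos K(1)] by simp
    then show "hom_walks L l G = hom_walks L l H"
      using hom_stretch_edges_eq_hom_walks[OF L es l_pos G]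
        hom_stretch_edges_eq_hom_walks[OF L es l_pos H]
      by simp
  qed
  then show ?thesis
    using hom_eq_hom_walks_1[OF simple[OF L] G] hom_eq_hom_walks_1[OF simple[OF L] H] by simp
qed

end

theorem theorem43:
  fixes \<F> :: "nat graph set" and K :: "'k graph"
  assumes "\<forall>F\<in>\<F>. simple_graph F"
    and "closed_under_subdivisions \<F>"
    and "wf_graph K" and "\<not> bipartite K"
  shows "\<F> \<subseteq> cl (restrict_class \<F> K) \<and>
         admits_cancellation (hom_equiv \<F> :: 'a graph \<Rightarrow> 'a graph \<Rightarrow> bool)
           (hom_equiv \<F>) K"
proof
  interpret subdivision_closed_class \<F>
    using assms(1,2) by unfold_locales simp_all
  show "\<F> \<subseteq> cl (restrict_class \<F> K)"
  proof
    fix L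
    assume L: "L \<in> \<F>"
    show "L \<in> cl (restrict_class \<F> K)"
      unfolding cl_def restrict_class_def hom_equiv_def
      using simple[OF L]
        hom_eq_if_hom_eq_on_restrict_class[OF assms(3,4) simple_graph_wf simple_graph_wf _ L]
      by auto
  qed
  have "hom F G = hom F H"
    if "F \<in> \<F>" "hom F K > 0" "hom F (graph_prod G K) = hom F (graph_prod H K)"
    for F and G H :: "'a graph"
    using that by (simp add: hom_graph_prod simple)
  then show "admits_cancellation (hom_equiv \<F> :: 'a graph \<Rightarrow> 'a graph \<Rightarrow> bool) (hom_equiv \<F>) K"
    unfolding admits_cancellation_def hom_equiv_def
    using hom_eq_if_hom_eq_on_restrict_class[OF assms(3,4)] by blast
qed

end
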